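(* Let $R>0$, let $E\subset\mathbb{R}^d$ be an $R$-supported body and $A=co_R(E)$. Then: (i) $\partial E\subset\partial A$; (ii) $\operatorname{int}(E)\subset\operatorname{int}(A)$; (iii) $\mathcal{N}_R(E,a)=\mathcal{N}_R(A,a)$ for every $a\in\partial E$; (iv) $co_R(E)=E_R\cap\bigcap\{\mathbb{R}^d\setminus B(a+R\theta): a\in\partial E,\ \theta\in\mathcal{N}_R(E,a)\}$.
   Context: A body is a nonempty closed subset of $\mathbb{R}^d$. Fix $R>0$; $B(x)=\{y:|y-x|<R\}$; $S^{d-1}$ is the unit sphere. For a body $E$, $E_R=\{x:\operatorname{dist}(x,E)<R\}$. The $R$-hulloid is $co_R(E)=\bigcap\{\mathbb{R}^d\setminus B : B \text{ an open ball of radius } R,\ B\cap E=\emptyset\}$ (equal to $\mathbb{R}^d$ if no such ball exists). For a body $A$ and $a\in\partial A$, $\mathcal{N}_R(A,a)=\{v\in S^{d-1}: A\cap B(a+Rv)=\emptyset\}$ (the unit vectors $R$-supporting $A$ at $a$). A body $A$ is $R$-supported if $\mathcal{N}_R(A,a)\neq\emptyset$ for every $a\in\partial A$. *)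

theory Defs
  imports "HOL-Analysis.Analysis"
begin

definition body :: "'a::euclidean_space set \<Rightarrow> bool" where
  "body E \<longleftrightarrow> E \<noteq> {} \<and> closed E"

definition nbhd_R :: "real \<Rightarrow> 'a::euclidean_space set \<Rightarrow> 'a set" where
  "nbhd_R R E = {x. infdist x E < R}"

definition co_R :: "real \<Rightarrow> 'a::euclidean_space set \<Rightarrow> 'a set" where
  "co_R R E = \<Inter> {UNIV - ball c R | c. ball c R \<inter> E = {}}"

definition normals_R :: "real \<Rightarrow> 'a::euclidean_space set \<Rightarrow> 'a \<Rightarrow> 'a set" where
  "normals_R R A a = {v. norm v = 1 \<and> A \<inter> ball (a + R *\<^sub>R v) R = {}}"

definition R_supported :: "real \<Rightarrow> 'a::euclidean_space set \<Rightarrow> bool" where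
  "R_supported R A \<longleftrightarrow> body A \<and> (\<forall>a\<in>frontier A. normals_R R A a \<noteq> {})"

end

theory Submission
  imports Defs
begin

text \<open>A ball of radius \<open>R\<close> missing \<open>E\<close> also misses \<open>co_R R E\<close>, so \<open>E\<close> and its
  hulloid have the same \<open>R\<close>-supporting balls; together with \<open>E \<subseteq> co_R R E\<close> this gives
  (i)--(iii). For (iv), a point \<open>x\<close> within distance \<open>R\<close> of \<open>E\<close> that lies in some ball of
  radius \<open>R\<close> missing \<open>E\<close> also lies in such a ball touching \<open>E\<close>: slide the centre towards
  a nearest point of \<open>E\<close> to \<open>x\<close> until its distance to \<open>E\<close> drops to \<open>R\<close>. The touching
  point is a frontier point of \<open>E\<close> with an \<open>R\<close>-supporting normal, so only the balls listed
  in (iv) (and the condition \<open>dist(x, E) < R\<close>) are needed to cut out the hulloid.\<close>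

lemma mem_co_R_iff:
  "x \<in> co_R R E \<longleftrightarrow> (\<forall>c. ball c R \<inter> E = {} \<longrightarrow> x \<notin> ball c R)"
  unfolding co_R_def by blast

lemma subset_co_R: "E \<subseteq> co_R R E"
  unfolding mem_co_R_iff subset_eq by blast

lemma co_R_disjoint_ball_iff:
  "co_R R E \<inter> ball c R = {} \<longleftrightarrow> E \<inter> ball c R = {}"
proof
  assume "co_R R E \<inter> ball c R = {}"
  then show "E \<inter> ball c R = {}"
    using subset_co_R[of E R] by blast
next
  assume "E \<inter> ball c R = {}"
  then show "co_R R E \<inter> ball c R = {}"
    by (auto simp: mem_co_R_iff Int_commute)
qed

lemma normals_R_co_R: "normals_R R (co_R R E) a = normals_R R E a"
  by (simp add: normals_R_def co_R_disjoint_ball_iff)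

lemma normals_R_not_interior:
  assumes "R > 0" and "v \<in> normals_R R A a"
  shows "a \<notin> interior A"
proof -
  have "ball (a + R *\<^sub>R v) R \<subseteq> - A"
    using assms(2) by (auto simp: normals_R_def)
  then have "cball (a + R *\<^sub>R v) R \<subseteq> - interior A"
    using closure_mono[of "ball (a + R *\<^sub>R v) R" "- A"] assms(1)
    by (simp add: closure_complement)
  moreover have "a \<in> cball (a + R *\<^sub>R v) R"
    using assms by (simp add: normals_R_def dist_norm)
  ultimately show ?thesis by blast
qed

lemma ball_disjoint_iff_le_infdist:
  assumes "E \<noteq> {}"
  shows "ball c R \<inter> E = {} \<longleftrightarrow> R \<le> infdist c E"
proof
  assume "ball c R \<inter> E = {}"
  then have "\<And>y. y \<in> E \<Longrightarrow> R \<le> dist c y" by (metis IntI empty_iff mem_ball not_less)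
  with assms show "R \<le> infdist c E"
    by (simp add: infdist_notempty cINF_greatest)
next
  assume "R \<le> infdist c E"
  then show "ball c R \<inter> E = {}"
    using infdist_le[of _ E c] by fastforce
qed

lemma frontier_subset_frontier_co_R:
  assumes "R > 0" and "R_supported R E"
  shows "frontier E \<subseteq> frontier (co_R R E)"
proof
  fix a assume a: "a \<in> frontier E"
  with assms(2) obtain v where "v \<in> normals_R R (co_R R E) a"
    by (auto simp: R_supported_def normals_R_co_R)
  with assms(1) have "a \<notin> interior (co_R R E)"
    by (rule normals_R_not_interior)
  moreover have "a \<in> E"
    using a assms(2) frontier_subset_closed by (auto simp: R_supported_def body_def)
  then have "a \<in> closure (co_R R E)"
    using subset_co_R closure_subset by blast
  ultimately show "a \<in> frontier (co_R R E)"
    by (simp add: frontier_def)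
qed

lemma co_R_subset_nbhd_R:
  assumes "R > 0" and "E \<noteq> {}"
  shows "co_R R E \<subseteq> nbhd_R R E"
proof
  fix x assume x: "x \<in> co_R R E"
  show "x \<in> nbhd_R R E"
  proof (rule ccontr)
    assume "x \<notin> nbhd_R R E"
    then have "ball x R \<inter> E = {}"
      using ball_disjoint_iff_le_infdist[OF assms(2)] by (simp add: nbhd_R_def not_less)
    with x assms(1) show False by (auto simp: mem_co_R_iff)
  qed
qed

lemma infdist_eq_touching_ball:
  fixes E :: "'a::euclidean_space set"
  assumes "R > 0" and "closed E" and "E \<noteq> {}" and "infdist c E = R"
  obtains a \<theta> where "a \<in> frontier E" and "\<theta> \<in> normals_R R E a" and "c = a + R *\<^sub>R \<theta>"
proof -
  obtain a where a: "a \<in> E" "dist c a = R"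
    using infdist_attains_inf[OF assms(2,3)] assms(4) by metis
  define \<theta> where "\<theta> = (1 / R) *\<^sub>R (c - a)"
  have centre: "c = a + R *\<^sub>R \<theta>"
    using assms(1) by (simp add: \<theta>_def)
  have "norm \<theta> = 1"
    using a(2) assms(1) by (simp add: \<theta>_def dist_norm)
  moreover have "ball c R \<inter> E = {}"
    using ball_disjoint_iff_le_infdist[OF assms(3)] assms(4) by simp
  ultimately have normal: "\<theta> \<in> normals_R R E a"
    using centre by (auto simp: normals_R_def)
  then have "a \<in> frontier E"
    using a(1) assms(1,2) normals_R_not_interior by (auto simp: frontier_def)
  then show thesis using normal centre by (rule that)
qed

lemma disjoint_ball_slides_to_touching_ball:
  fixes E :: "'a::euclidean_space set"
  assumes "R > 0" and "closed E" and "E \<noteq> {}"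
    and "ball c R \<inter> E = {}" and "x \<in> ball c R" and "infdist x E < R"
  obtains a \<theta> where "a \<in> frontier E" and "\<theta> \<in> normals_R R E a"
    and "x \<in> ball (a + R *\<^sub>R \<theta>) R"
proof -
  obtain e where e: "e \<in> E" "infdist x E = dist x e"
    using infdist_attains_inf[OF assms(2,3)] by blast
  define g where "g t = (1 - t) *\<^sub>R c + t *\<^sub>R e" for t :: real
  have "continuous_on {0..1} (\<lambda>t. infdist (g t) E)"
    unfolding g_def by (intro continuous_intros)
  moreover have "infdist (g 1) E \<le> R" "R \<le> infdist (g 0) E"
    using e(1) assms(1,4) ball_disjoint_iff_le_infdist[OF assms(3)] by (simp_all add: g_def)
  ultimately obtain t where t: "0 \<le> t" "t \<le> 1" "infdist (g t) E = R"
    using IVT2'[of "\<lambda>t. infdist (g t) E" 1 R 0] by auto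
  then obtain a \<theta> where "a \<in> frontier E" "\<theta> \<in> normals_R R E a" "g t = a + R *\<^sub>R \<theta>"
    using infdist_eq_touching_ball[OF assms(1-3)] by metis
  moreover have "g t \<in> ball x R"
    using convex_ball[of x R] t assms(5,6) e(2)
    unfolding convex_def g_def by (auto simp: dist_commute)
  ultimately show thesis
    by (metis that mem_ball dist_commute)
qed

lemma co_R_eq_nbhd_R_inter_touching_balls:
  fixes E :: "'a::euclidean_space set"
  assumes "R > 0" and "body E"
  shows "co_R R E = nbhd_R R E \<inter>
           \<Inter> {UNIV - ball (a + R *\<^sub>R \<theta>) R | a \<theta>. a \<in> frontier E \<and> \<theta> \<in> normals_R R E a}"
    (is "_ = _ \<inter> ?touching")
proof
  have E: "closed E" "E \<noteq> {}"
    using assms(2) by (auto simp: body_def)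
  have "co_R R E \<subseteq> nbhd_R R E"
    using assms(1) E(2) by (rule co_R_subset_nbhd_R)
  moreover have "co_R R E \<subseteq> ?touching"
    by (auto simp: mem_co_R_iff normals_R_def Int_commute)
  ultimately show "co_R R E \<subseteq> nbhd_R R E \<inter> ?touching"
    by blast
  show "nbhd_R R E \<inter> ?touching \<subseteq> co_R R E"
  proof
    fix x assume x: "x \<in> nbhd_R R E \<inter> ?touching"
    show "x \<in> co_R R E"
    proof (unfold mem_co_R_iff, intro allI impI notI)
      fix c assume "ball c R \<inter> E = {}" and "x \<in> ball c R"
      moreover have "infdist x E < R"
        using x by (simp add: nbhd_R_def)
      ultimately obtain a \<theta> where "a \<in> frontier E" "\<theta> \<in> normals_R R E a"
        and "x \<in> ball (a + R *\<^sub>R \<theta>) R"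
        by (rule disjoint_ball_slides_to_touching_ball[OF assms(1) E])
      with x show False by blast
    qed
  qed
qed

theorem mainTheorem2:
  fixes E :: "'a::euclidean_space set" and R :: real
  assumes "R > 0" and "R_supported R E"
  shows "frontier E \<subseteq> frontier (co_R R E) \<and>
         interior E \<subseteq> interior (co_R R E) \<and>
         (\<forall>a\<in>frontier E. normals_R R E a = normals_R R (co_R R E) a) \<and>
         co_R R E = nbhd_R R E \<inter>
           \<Inter> {UNIV - ball (a + R *\<^sub>R \<theta>) R | a \<theta>. a \<in> frontier E \<and> \<theta> \<in> normals_R R E a}"
proof (intro conjI ballI)
  show "frontier E \<subseteq> frontier (co_R R E)"
    using assms by (rule frontier_subset_frontier_co_R)
  show "interior E \<subseteq> interior (co_R R E)"
    by (intro interior_mono subset_co_R)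
  show "normals_R R E a = normals_R R (co_R R E) a" for a
    by (simp add: normals_R_co_R)
  have "body E"
    using assms(2) by (simp add: R_supported_def)
  with assms(1) show "co_R R E = nbhd_R R E \<inter>
      \<Inter> {UNIV - ball (a + R *\<^sub>R \<theta>) R | a \<theta>. a \<in> frontier E \<and> \<theta> \<in> normals_R R E a}"
    by (rule co_R_eq_nbhd_R_inter_touching_balls)
qed

end
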